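(* Consider the resilient constrained consensus algorithm described in the context with exactly $f$ Byzantine agents, i.e. $|\mathcal F| = f$, and a fixed step size $\alpha>0$. Suppose that for every choice of initial states $x_i(0)\in\mathcal X_i$ ($i\in\mathcal H$), every behaviour of the Byzantine agents and every tie-breaking in the filtering step, all normal agents reach a consensus at some point of $\mathcal X=\bigcap_{i\in\mathcal H}\mathcal X_i$, meaning there exists $z\in\mathcal X$ with $x_i(t)\to z$ as $t\to\infty$ for all $i\in\mathcal H$. Then the set of normal agents $\mathcal H$ is $2f$-redundant.
   Context: Setting: There are $n$ agents $\mathcal N=\{1,\dots,n\}$, and every agent can communicate with every other agent (complete graph). An integer $f\ge 0$ is known to all agents. The agents are partitioned into normal agents $\mathcal H$ and Byzantine agents $\mathcal F$ with $|\mathcal F|\le f$, so $|\mathcal H|\ge n-f$. Which agents are Byzantine is unknown to the normal agents. Each normal agent $i\in\mathcal H$ has a nonempty closed convex set $\mathcal X_i\subseteq\mathbb R^m$, and $\mathcal X=\bigcap_{i\in\mathcal H}\mathcal X_i$ is nonempty. Each normal agent's state is constrained to lie in $\mathcal X_i$; in particular $x_i(0)\in\mathcal X_i$. Algorithm (discrete time $t=0,1,2,\dots$): each normal agent $i$ has a state $x_i(t)\in\mathbb R^m$. At time $t$, agent $i$ receives a vector $x_{ji}(t)$ from each $j\in\mathcal N\setminus\{i\}$. If $j\in\mathcal H$, then $x_{ji}(t)=x_j(t)$. If $j\in\mathcal F$, then $x_{ji}(t)$ is arbitrary and may differ for different recipients. Agent $i$ discards the $f$ received vectors with the largest Euclidean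 distance $\|x_i(t)-x_{ji}(t)\|$, with ties broken arbitrarily. Let $\mathcal M_i(t)\subseteq\mathcal N\setminus\{i\}$ be the set of the remaining $n-f-1$ senders. The update is $$x_i(t+1)=\mathrm P_{\mathcal X_i}\Big[x_i(t)+\alpha\sum_{j\in\mathcal M_i(t)}(x_{ji}(t)-x_i(t))\Big],$$ where $\alpha>0$ and $\mathrm P_{\mathcal C}[x]=\arg\min_{y\in\mathcal C}\|x-y\|$ is the Euclidean projection. Definition: $\mathcal H$ is $k$-redundant if for every $\mathcal S\subseteq\mathcal H$ with $|\mathcal S|\ge n-k$ we have $\bigcap_{i\in\mathcal S}\mathcal X_i=\bigcap_{i\in\mathcal H}\mathcal X_i$. *)

theory Defs
  imports "HOL-Analysis.Analysis"
begin

text \<open>A state trajectory is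
  x :: nat => nat => 'a, with x t i the state of agent i at time t
  (only meaningful for normal agents). Byzantine behaviour is an arbitrary
  function byz t j i = the vector agent j sends to agent i at time t.\<close>

definition received :: "nat set \<Rightarrow> (nat \<Rightarrow> nat \<Rightarrow> 'a) \<Rightarrow> (nat \<Rightarrow> nat \<Rightarrow> nat \<Rightarrow> 'a)
    \<Rightarrow> nat \<Rightarrow> nat \<Rightarrow> nat \<Rightarrow> 'a" where
  "received F x byz t j i = (if j \<in> F then byz t j i else x t j)"

definition valid_filter :: "nat \<Rightarrow> nat \<Rightarrow> nat \<Rightarrow> 'a::real_normed_vector \<Rightarrow> (nat \<Rightarrow> 'a) \<Rightarrow> nat set \<Rightarrow> bool" where
  "valid_filter n f i xi r M \<longleftrightarrow>
     M \<subseteq> {0..<n} - {i} \<and> card M = n - f - 1 \<and>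
     (\<forall>j\<in>M. \<forall>k\<in>({0..<n} - {i}) - M. dist xi (r j) \<le> dist xi (r k))"

definition is_execution :: "nat \<Rightarrow> nat \<Rightarrow> nat set \<Rightarrow> nat set \<Rightarrow> (nat \<Rightarrow> 'a::euclidean_space set)
    \<Rightarrow> real \<Rightarrow> (nat \<Rightarrow> nat \<Rightarrow> 'a) \<Rightarrow> (nat \<Rightarrow> nat \<Rightarrow> nat \<Rightarrow> 'a) \<Rightarrow> (nat \<Rightarrow> nat \<Rightarrow> nat set) \<Rightarrow> bool" where
  "is_execution n f H F X \<alpha> x byz M \<longleftrightarrow>
     (\<forall>i\<in>H. x 0 i \<in> X i) \<and>
     (\<forall>t. \<forall>i\<in>H. valid_filter n f i (x t i) (\<lambda>j. received F x byz t j i) (M t i) \<and>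
        x (Suc t) i = closest_point (X i)
          (x t i + \<alpha> *\<^sub>R (\<Sum>j\<in>M t i. received F x byz t j i - x t i)))"

text \<open>k-redundancy. READING: subsets S are required to be nonempty
  (only relevant in the degenerate case n \<le> k).\<close>
definition redundant :: "nat \<Rightarrow> nat \<Rightarrow> nat set \<Rightarrow> (nat \<Rightarrow> 'a set) \<Rightarrow> bool" where
  "redundant n k H X \<longleftrightarrow>
     (\<forall>S. S \<subseteq> H \<and> S \<noteq> {} \<and> int (card S) \<ge> int n - int k \<longrightarrow>
        (\<Inter>i\<in>S. X i) = (\<Inter>i\<in>H. X i))"

end

theory Submission
  imports Defs
begin

text \<open>Suppose a point \<open>p\<close> lies in \<open>X i\<close> for every \<open>i\<close> in a set \<open>S\<close> of at least \<open>n - 2f\<close>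
  normal agents. Let every Byzantine agent send \<open>p\<close> and start the agents of \<open>S\<close> at \<open>p\<close>.
  An agent of \<open>S\<close> then has at least \<open>n - f - 1\<close> senders (the rest of \<open>S\<close> and all of \<open>F\<close>)
  at distance zero, so a legitimate tie-breaking keeps exactly those, and its projected
  update leaves it at \<open>p\<close>. Hence the agents of \<open>S\<close> stay at \<open>p\<close> forever, and consensus at a
  point of \<open>\<Inter>i\<in>H. X i\<close> forces \<open>p\<close> into that intersection.\<close>

lemma exists_subset_card_least:
  fixes d :: "'b \<Rightarrow> 'c::linorder"
  assumes "finite A" "m \<le> card A"
  shows "\<exists>M. M \<subseteq> A \<and> card M = m \<and> (\<forall>j\<in>M. \<forall>k\<in>A - M. d j \<le> d k)"
  using assms(2)
proof (induction m)
  case 0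
  then show ?case by auto
next
  case (Suc m)
  then obtain M where M: "M \<subseteq> A" "card M = m" "\<forall>j\<in>M. \<forall>k\<in>A - M. d j \<le> d k"
    by auto
  have "finite M" using M(1) assms(1) finite_subset by blast
  have rest_fin: "finite (A - M)" using assms(1) by simp
  have "A - M \<noteq> {}"
  proof
    assume "A - M = {}"
    then have "card A \<le> card M" using \<open>finite M\<close> card_mono by blast
    then show False using Suc.prems M(2) by simp
  qed
  then obtain k where k: "k \<in> A - M" "\<forall>l\<in>A - M. d k \<le> d l"
    using ex_is_arg_min_if_finite[OF rest_fin, of d] unfolding is_arg_min_linorder by blast
  show ?case
  proof (intro exI[of _ "insert k M"] conjI)
    show "insert k M \<subseteq> A" using M(1) k(1) by blast
    show "card (insert k M) = Suc m" using \<open>finite M\<close> k(1) M(2) by simp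
  qed (use M(3) k(2) in auto)
qed

lemma valid_filter_exists: "\<exists>M. valid_filter n f i xi r M"
proof -
  have "n - f - 1 \<le> card ({0..<n} - {i})"
    by (cases "i < n") (auto simp: card_Diff_singleton_if)
  then show ?thesis
    using exists_subset_card_least[of "{0..<n} - {i}" "n - f - 1" "\<lambda>j. dist xi (r j)"]
    unfolding valid_filter_def by auto
qed

lemma valid_filter_if_senders_agree:
  assumes "M \<subseteq> {0..<n} - {i}" "card M = n - f - 1" "\<forall>j\<in>M. r j = xi"
  shows "valid_filter n f i xi r M"
  using assms unfolding valid_filter_def by simp

lemma exists_filter_within:
  assumes "finite S" "finite F" "S \<inter> F = {}" "i \<in> S" "n \<le> card S + 2 * card F"
  shows "\<exists>M. M \<subseteq> (S \<union> F) - {i} \<and> card M = n - card F - 1"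
proof -
  have "card ((S \<union> F) - {i}) = card S + card F - 1"
    using assms(1-4) by (simp add: card_Un_disjoint card_Diff_singleton_if)
  moreover have "card S > 0"
    using assms(1,4) card_gt_0_iff by blast
  ultimately have "n - card F - 1 \<le> card ((S \<union> F) - {i})"
    using assms(5) by linarith
  then show ?thesis by (meson obtain_subset_with_card_n)
qed

definition prefer_filter ::
    "nat \<Rightarrow> nat \<Rightarrow> nat \<Rightarrow> 'a::real_normed_vector \<Rightarrow> (nat \<Rightarrow> 'a) \<Rightarrow> nat set \<Rightarrow> nat set" where
  "prefer_filter n f i xi r M0 =
     (if valid_filter n f i xi r M0 then M0 else SOME M. valid_filter n f i xi r M)"

lemma valid_filter_prefer_filter: "valid_filter n f i xi r (prefer_filter n f i xi r M0)"
  unfolding prefer_filter_def using someI_ex[OF valid_filter_exists[of n f i xi r]] by simp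

definition received_const :: "nat set \<Rightarrow> 'a \<Rightarrow> (nat \<Rightarrow> 'a) \<Rightarrow> nat \<Rightarrow> 'a" where
  "received_const F q s j = (if j \<in> F then q else s j)"

lemma received_const_byz_eq: "received F x (\<lambda>_ _ _. q) t j i = received_const F q (x t) j"
  unfolding received_def received_const_def by simp

definition consensus_update ::
    "nat set \<Rightarrow> (nat \<Rightarrow> 'a::euclidean_space set) \<Rightarrow> real \<Rightarrow> 'a
      \<Rightarrow> ((nat \<Rightarrow> 'a) \<Rightarrow> nat \<Rightarrow> nat set) \<Rightarrow> (nat \<Rightarrow> 'a) \<Rightarrow> nat \<Rightarrow> 'a" where
  "consensus_update F X \<alpha> q sel s i =
     closest_point (X i) (s i + \<alpha> *\<^sub>R (\<Sum>j\<in>sel s i. received_const F q s j - s i))"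

lemma is_execution_funpow:
  assumes "\<forall>i\<in>H. x0 i \<in> X i"
    and "\<forall>s. \<forall>i\<in>H. valid_filter n f i (s i) (received_const F q s) (sel s i)"
  shows "is_execution n f H F X \<alpha> (\<lambda>t. (consensus_update F X \<alpha> q sel ^^ t) x0)
           (\<lambda>_ _ _. q) (\<lambda>t. sel ((consensus_update F X \<alpha> q sel ^^ t) x0))"
  using assms unfolding is_execution_def received_const_byz_eq
  by (simp add: consensus_update_def)

lemma execution_stalled_at:
  fixes X :: "nat \<Rightarrow> 'a::euclidean_space set"
  assumes part: "H \<union> F = {0..<n}" "H \<inter> F = {}"
    and cardF: "card F = f"
    and Xne: "\<forall>i\<in>H. X i \<noteq> {}"
    and S: "S \<subseteq> H" "n \<le> card S + 2 * f"
    and p: "\<forall>i\<in>S. p \<in> X i"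
  shows "\<exists>x byz M. is_execution n f H F X \<alpha> x byz M \<and> (\<forall>t. \<forall>i\<in>S. x t i = p)"
proof -
  have "finite (H \<union> F)" using part(1) by simp
  then have "finite H" "finite F" by auto
  moreover have "finite S" "S \<inter> F = {}" using S(1) part(2) \<open>finite H\<close> finite_subset by auto
  ultimately have "\<forall>i\<in>S. \<exists>M. M \<subseteq> (S \<union> F) - {i} \<and> card M = n - f - 1"
    using exists_filter_within[of S F _ n] S(2) cardF by blast
  then obtain M0 where M0: "\<forall>i\<in>S. M0 i \<subseteq> (S \<union> F) - {i} \<and> card (M0 i) = n - f - 1"
    by metis
  define sel where "sel s i = prefer_filter n f i (s i) (received_const F p s) (M0 i)" for s i
  define x0 where "x0 i = (if i \<in> S then p else SOME y. y \<in> X i)" for i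
  define x where "x t = (consensus_update F X \<alpha> p sel ^^ t) x0" for t
  have "is_execution n f H F X \<alpha> x (\<lambda>_ _ _. p) (\<lambda>t. sel (x t))"
    unfolding x_def sel_def
  proof (rule is_execution_funpow)
    show "\<forall>i\<in>H. x0 i \<in> X i"
      using p Xne unfolding x0_def by (auto intro: someI_ex simp: ex_in_conv)
  qed (simp add: valid_filter_prefer_filter)
  moreover have "\<forall>i\<in>S. x t i = p" for t
  proof (induction t)
    case 0
    then show ?case by (simp add: x_def x0_def)
  next
    case (Suc t)
    show ?case
    proof
      fix i assume "i \<in> S"
      have agree: "\<forall>j\<in>M0 i. received_const F p (x t) j = x t i"
        using M0 Suc.IH \<open>i \<in> S\<close> unfolding received_const_def by auto
      have "M0 i \<subseteq> {0..<n} - {i}" using M0 \<open>i \<in> S\<close> S(1) part(1) by blast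
      then have "valid_filter n f i (x t i) (received_const F p (x t)) (M0 i)"
        using valid_filter_if_senders_agree[OF _ _ agree] M0 \<open>i \<in> S\<close> by blast
      then have "sel (x t) i = M0 i" by (simp add: sel_def prefer_filter_def)
      then have "x (Suc t) i = closest_point (X i) (x t i)"
        using agree by (simp add: x_def consensus_update_def)
      then show "x (Suc t) i = p"
        using Suc.IH \<open>i \<in> S\<close> p by (simp add: closest_point_self)
    qed
  qed
  ultimately show ?thesis by blast
qed

theorem theorem1:
  fixes n f :: nat and H F :: "nat set" and X :: "nat \<Rightarrow> 'a::euclidean_space set"
    and \<alpha> :: real
  assumes part: "H \<union> F = {0..<n}" "H \<inter> F = {}"
    and cardF: "card F = f"
    and Xi: "\<forall>i\<in>H. X i \<noteq> {} \<and> closed (X i) \<and> convex (X i)"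
    and Xne: "(\<Inter>i\<in>H. X i) \<noteq> {}"
    and alpha: "\<alpha> > 0"
    and consensus: "\<forall>x byz M. is_execution n f H F X \<alpha> x byz M \<longrightarrow>
        (\<exists>z\<in>(\<Inter>i\<in>H. X i). \<forall>i\<in>H. (\<lambda>t. x t i) \<longlonglongrightarrow> z)"
  shows "redundant n (2 * f) H X"
  unfolding redundant_def
proof (intro allI impI)
  fix S assume "S \<subseteq> H \<and> S \<noteq> {} \<and> int n - int (2 * f) \<le> int (card S)"
  then have S: "S \<subseteq> H" "n \<le> card S + 2 * f" and "S \<noteq> {}" by auto
  then obtain i where "i \<in> S" by blast
  have "p \<in> (\<Inter>i\<in>H. X i)" if "p \<in> (\<Inter>i\<in>S. X i)" for p
  proof -
    have "\<forall>i\<in>H. X i \<noteq> {}" using Xi by blast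
    moreover have "\<forall>i\<in>S. p \<in> X i" using that by blast
    ultimately obtain x byz M where exe: "is_execution n f H F X \<alpha> x byz M"
      and stalled: "\<forall>t. \<forall>i\<in>S. x t i = p"
      using execution_stalled_at[OF part cardF _ S, of X p \<alpha>] by blast
    obtain z where "z \<in> (\<Inter>i\<in>H. X i)" and "\<forall>i\<in>H. (\<lambda>t. x t i) \<longlonglongrightarrow> z"
      using consensus exe by metis
    then have "z \<in> (\<Inter>i\<in>H. X i)" and "(\<lambda>t. x t i) \<longlonglongrightarrow> z"
      using S(1) \<open>i \<in> S\<close> by auto
    moreover have "(\<lambda>t. x t i) = (\<lambda>_. p)" using stalled \<open>i \<in> S\<close> by simp
    ultimately show ?thesis using LIMSEQ_unique tendsto_const by metis
  qed
  then show "(\<Inter>i\<in>S. X i) = (\<Inter>i\<in>H. X i)" using S(1) by blast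
qed

end
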